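(* Let $L$ be a subfit frame. Then $\overline{\mathrm{LSC}}(L)$ is meet-dense in $\overline{\mathrm{C}}(\mathrm{coS}(L))$ and $\overline{\mathrm{USC}}(L)$ is join-dense in $\overline{\mathrm{C}}(\mathrm{coS}(L))$.
   Context: A frame $L$ is subfit if for all $a,b\in L$ with $a\not\le b$ there is $c$ with $a\vee c=1\ne b\vee c$. A sublocale of $L$ is a subset closed under arbitrary meets and such that $x\to s\in S$ for $x\in L$, $s\in S$; $\mathrm{coS}(L)$ is the frame of all sublocales ordered by reverse inclusion. For $a\in L$, $\mathfrak{c}(a)=\{x\mid x\ge a\}$ is the closed sublocale. $\mathbb{Q}$ is the rationals. The frame of extended reals $\mathfrak{L}(\overline{\mathbb{R}})$ is presented by generators $(r,\textsf{---})$, $(\textsf{---},s)$ ($r,s\in\mathbb{Q}$) subject to (r1) $(r,\textsf{---})\wedge(\textsf{---},s)=0$ whenever $r\ge s$; (r2) $(r,\textsf{---})\vee(\textsf{---},s)=1$ whenever $r<s$; (r3) $(r,\textsf{---})=\bigvee_{s>r}(s,\textsf{---})$; (r4) $(\textsf{---},s)=\bigvee_{r<s}(\textsf{---},r)$. For a frame $M$, $\overline{\mathrm{C}}(M)$ is the set of frame homomorphisms $\mathfrak{L}(\overline{\mathbb{R}})\to M$ ordered by $f\le g$ iff $f(r,\textsf{---})\le g(r,\textsf{---})$ for all $r$. $\overline{\mathrm{LSC}}(L)$ (extended lower semicontinuous functions) is the set of $g\in\overline{\mathrm{C}}(\mathrm{coS}(L))$ with $g(r,\textsf{---})$ a closed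 sublocale for all $r\in\mathbb{Q}$; $\overline{\mathrm{USC}}(L)$ is the set of $g\in\overline{\mathrm{C}}(\mathrm{coS}(L))$ with $g(\textsf{---},s)$ closed for all $s$. A subset $A$ of a poset $P$ is meet-dense (join-dense) if every element of $P$ is a meet (join) in $P$ of elements of $A$. *)

theory Defs
  imports Complex_Main
begin

class frame = complete_lattice +
  assumes inf_Sup_distrib_frame: "inf a (Sup B) = (SUP b\<in>B. inf a b)"

definition subfit :: "'a::frame itself \<Rightarrow> bool" where
  "subfit _ \<longleftrightarrow> (\<forall>a b :: 'a. \<not> a \<le> b \<longrightarrow> (\<exists>c. sup a c = top \<and> sup b c \<noteq> top))"

definition himp :: "'a::frame \<Rightarrow> 'a \<Rightarrow> 'a" where
  "himp x s = Sup {y. inf y x \<le> s}"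

definition is_sublocale :: "'a::frame set \<Rightarrow> bool" where
  "is_sublocale S \<longleftrightarrow> (\<forall>X. X \<subseteq> S \<longrightarrow> Inf X \<in> S) \<and> (\<forall>x s. s \<in> S \<longrightarrow> himp x s \<in> S)"

text \<open>The frame coS(L): sublocales ordered by reverse inclusion.\<close>
definition coS_le :: "'a::frame set \<Rightarrow> 'a set \<Rightarrow> bool" where
  "coS_le A B \<longleftrightarrow> B \<subseteq> A"

definition coS_top :: "'a::frame set" where "coS_top = {top}"
definition coS_bot :: "'a::frame set" where "coS_bot = UNIV"

definition coS_Join :: "'a::frame set set \<Rightarrow> 'a set" where
  "coS_Join F = \<Inter>F"

definition coS_join :: "'a::frame set \<Rightarrow> 'a set \<Rightarrow> 'a set" where
  "coS_join A B = A \<inter> B"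

definition coS_meet :: "'a::frame set \<Rightarrow> 'a set \<Rightarrow> 'a set" where
  "coS_meet A B = \<Inter>{S. is_sublocale S \<and> A \<union> B \<subseteq> S}"

definition closed_sub :: "'a::frame \<Rightarrow> 'a set" where
  "closed_sub a = {x. a \<le> x}"

text \<open>Generators of the frame of extended reals: Up r = (r,---), Down s = (---,s).\<close>
datatype gen = Up rat | Down rat

text \<open>Frame homomorphisms L(extended reals) -> coS(L), given (by the universal
  property of the presentation) by their values on generators satisfying (r1)-(r4).\<close>
definition extC_coS :: "'a::frame itself \<Rightarrow> (gen \<Rightarrow> 'a set) set" where
  "extC_coS _ = {f. (\<forall>g. is_sublocale (f g))
     \<and> (\<forall>r s. r \<ge> s \<longrightarrow> coS_meet (f (Up r)) (f (Down s)) = coS_bot)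
     \<and> (\<forall>r s. r < s \<longrightarrow> coS_join (f (Up r)) (f (Down s)) = coS_top)
     \<and> (\<forall>r. f (Up r) = coS_Join {f (Up s) | s. s > r})
     \<and> (\<forall>s. f (Down s) = coS_Join {f (Down r) | r. r < s})}"

definition extC_le :: "(gen \<Rightarrow> 'a::frame set) \<Rightarrow> (gen \<Rightarrow> 'a set) \<Rightarrow> bool" where
  "extC_le f g \<longleftrightarrow> (\<forall>r. coS_le (f (Up r)) (g (Up r)))"

definition extLSC :: "'a::frame itself \<Rightarrow> (gen \<Rightarrow> 'a set) set" where
  "extLSC T = {g \<in> extC_coS T. \<forall>r. \<exists>a. g (Up r) = closed_sub a}"

definition extUSC :: "'a::frame itself \<Rightarrow> (gen \<Rightarrow> 'a set) set" where
  "extUSC T = {g \<in> extC_coS T. \<forall>s. \<exists>a. g (Down s) = closed_sub a}"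

definition is_meet_in :: "'b set \<Rightarrow> ('b \<Rightarrow> 'b \<Rightarrow> bool) \<Rightarrow> 'b set \<Rightarrow> 'b \<Rightarrow> bool" where
  "is_meet_in P le B x \<longleftrightarrow> x \<in> P \<and> (\<forall>b\<in>B. le x b) \<and> (\<forall>y\<in>P. (\<forall>b\<in>B. le y b) \<longrightarrow> le y x)"

definition is_join_in :: "'b set \<Rightarrow> ('b \<Rightarrow> 'b \<Rightarrow> bool) \<Rightarrow> 'b set \<Rightarrow> 'b \<Rightarrow> bool" where
  "is_join_in P le B x \<longleftrightarrow> x \<in> P \<and> (\<forall>b\<in>B. le b x) \<and> (\<forall>y\<in>P. (\<forall>b\<in>B. le b y) \<longrightarrow> le x y)"

definition meet_dense :: "'b set \<Rightarrow> ('b \<Rightarrow> 'b \<Rightarrow> bool) \<Rightarrow> 'b set \<Rightarrow> bool" where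
  "meet_dense P le A \<longleftrightarrow> (\<forall>x\<in>P. \<exists>B\<subseteq>A. is_meet_in P le B x)"

definition join_dense :: "'b set \<Rightarrow> ('b \<Rightarrow> 'b \<Rightarrow> bool) \<Rightarrow> 'b set \<Rightarrow> bool" where
  "join_dense P le A \<longleftrightarrow> (\<forall>x\<in>P. \<exists>B\<subseteq>A. is_join_in P le B x)"

end

theory Submission
  imports Defs
begin

text \<open>
  Fix f and r < s, and put F = f(s,-), D = f(-,s). By (r1) the sublocales F and D together
  cover L, and by (r2) f(r,-) meets D only trivially. For every x the sublocale
  c(x) \<inter> o(\<nu>_D x) is the complement of c(\<nu>_D x) \<or> o(x) \<supseteq> D, so it lies in F; and in a
  subfit frame every open sublocale o(n) is the join of the closed sublocales c(e) with
  e \<or> n = 1. Hence, if every closed sublocale inside F lies inside Y = y(s,-), then all the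
  sublocales c(x) \<inter> o(\<nu>_D x) lie in Y. Together with D they cover L, so Y and D cover L,
  which forces f(r,-) \<subseteq> Y; letting s decrease to r gives y \<le> f. The hypothesis on y holds
  whenever y is below all lower semicontinuous step functions above f (value +\<infinity> on c(a)
  and t elsewhere), which gives meet density. Join density follows by the order-reversing
  involution f \<mapsto> -f, which maps lower to upper semicontinuous functions.
\<close>

section \<open>Heyting implication\<close>

lemma eq_if_same_lower_bounds:
  fixes a :: "'a::order"
  shows "(\<And>y. y \<le> a \<longleftrightarrow> y \<le> b) \<Longrightarrow> a = b"
  by (meson order.antisym order.refl)

context frame begin

subclass distrib_lattice
proof
  have "inf x (sup y z) = sup (inf x y) (inf x z)" for x y z
    using inf_Sup_distrib_frame[of x "{y, z}"] by simp
  then show "sup x (inf y z) = inf (sup x y) (sup x z)" for x y z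
    by (rule distrib_imp1)
qed

end

lemma le_himp_iff:
  fixes x :: "'a::frame"
  shows "y \<le> himp x s \<longleftrightarrow> inf y x \<le> s"
proof
  assume "y \<le> himp x s"
  then have "inf y x \<le> inf x (himp x s)" by (simp add: le_infI1 inf.coboundedI2)
  also have "\<dots> = (SUP b\<in>{y. inf y x \<le> s}. inf x b)"
    by (simp add: himp_def inf_Sup_distrib_frame)
  also have "\<dots> \<le> s" by (auto intro: SUP_least simp: inf_commute)
  finally show "inf y x \<le> s" .
qed (auto simp: himp_def intro: Sup_upper)

lemma le_himp:
  fixes x :: "'a::frame"
  shows "s \<le> himp x s"
  by (simp add: le_himp_iff)

lemma inf_himp_le:
  fixes x :: "'a::frame"
  shows "inf x (himp x s) \<le> s"
  using le_himp_iff[of "himp x s" x s] by (simp add: inf_commute)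

lemma himp_eq_top_iff:
  fixes x :: "'a::frame"
  shows "himp x s = top \<longleftrightarrow> x \<le> s"
  using le_himp_iff[of top x s] by (simp add: top_unique)

lemma inf_himp_eq:
  fixes x :: "'a::frame"
  shows "s \<le> x \<Longrightarrow> inf x (himp x s) = s"
  by (simp add: inf_himp_le le_himp order.antisym)

lemma himp_Inf:
  fixes x :: "'a::frame"
  shows "himp x (Inf X) = Inf (himp x ` X)"
  by (rule eq_if_same_lower_bounds) (simp add: le_himp_iff le_Inf_iff)

lemma himp_inf:
  fixes x :: "'a::frame"
  shows "himp x (inf p q) = inf (himp x p) (himp x q)"
  by (rule eq_if_same_lower_bounds) (simp add: le_himp_iff)

lemma himp_himp:
  fixes x :: "'a::frame"
  shows "himp x (himp y s) = himp (inf x y) s"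
  by (rule eq_if_same_lower_bounds) (simp add: le_himp_iff inf_assoc)

lemma himp_himp_same:
  fixes x :: "'a::frame"
  shows "himp x (himp x s) = himp x s"
  by (simp add: himp_himp)

lemma himp_inf_same:
  fixes x :: "'a::frame"
  shows "himp x (inf x s) = himp x s"
  using himp_eq_top_iff[of x x] by (simp add: himp_inf)

lemma himp_eq_if_sup_eq_top:
  fixes x :: "'a::frame"
  assumes "sup e x = top" "e \<le> s"
  shows "himp x s = s"
proof (rule order.antisym)
  have "himp x s = sup (inf (himp x s) e) (inf (himp x s) x)"
    using assms(1) by (metis inf_sup_distrib1 inf_top_right)
  also have "\<dots> \<le> s"
    using assms(2) inf_himp_le[of x s] by (metis inf_commute le_infI2 le_supI)
  finally show "himp x s \<le> s" .
qed (rule le_himp)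

section \<open>Sublocales\<close>

definition open_sub :: "'a::frame \<Rightarrow> 'a set" where
  "open_sub a = {x. himp a x = x}"

definition nucleus :: "'a::frame set \<Rightarrow> 'a \<Rightarrow> 'a" where
  "nucleus S x = Inf {s \<in> S. x \<le> s}"

(* The join in the lattice of sublocales, i.e. the binary meet of coS(L). *)
definition sublocale_join :: "'a::frame set \<Rightarrow> 'a set \<Rightarrow> 'a set" where
  "sublocale_join A B = {inf a b |a b. a \<in> A \<and> b \<in> B}"

definition cover :: "'a::frame set \<Rightarrow> 'a set \<Rightarrow> bool" where
  "cover A B \<longleftrightarrow> (\<forall>x. \<exists>a\<in>A. \<exists>b\<in>B. x = inf a b)"

lemma is_sublocaleI:
  "(\<And>X. X \<subseteq> S \<Longrightarrow> Inf X \<in> S) \<Longrightarrow> (\<And>x s. s \<in> S \<Longrightarrow> himp x s \<in> S) \<Longrightarrow> is_sublocale S"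
  unfolding is_sublocale_def by blast

lemma sublocale_Inf_mem: "is_sublocale S \<Longrightarrow> X \<subseteq> S \<Longrightarrow> Inf X \<in> S"
  unfolding is_sublocale_def by blast

lemma sublocale_himp_mem: "is_sublocale S \<Longrightarrow> s \<in> S \<Longrightarrow> himp x s \<in> S"
  unfolding is_sublocale_def by blast

lemma sublocale_top_mem: "is_sublocale S \<Longrightarrow> top \<in> S"
  using sublocale_Inf_mem[of S "{}"] by simp

lemma nucleus_mem: "is_sublocale S \<Longrightarrow> nucleus S x \<in> S"
  unfolding nucleus_def by (rule sublocale_Inf_mem) auto

lemma le_nucleus: "x \<le> nucleus S x"
  unfolding nucleus_def by (auto intro: Inf_greatest)

lemma nucleus_le: "s \<in> S \<Longrightarrow> x \<le> s \<Longrightarrow> nucleus S x \<le> s"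
  unfolding nucleus_def by (auto intro: Inf_lower)

lemma is_sublocale_UNIV: "is_sublocale (UNIV :: 'a::frame set)"
  by (rule is_sublocaleI) simp_all

lemma is_sublocale_top: "is_sublocale {top :: 'a::frame}"
proof (rule is_sublocaleI)
  show "Inf X \<in> {top}" if "X \<subseteq> {top}" for X :: "'a set"
    using that by (auto simp: subset_singleton_iff)
qed (simp add: himp_eq_top_iff)

lemma is_sublocale_Int: "is_sublocale A \<Longrightarrow> is_sublocale B \<Longrightarrow> is_sublocale (A \<inter> B)"
  by (intro is_sublocaleI) (simp_all add: sublocale_Inf_mem sublocale_himp_mem)

lemma is_sublocale_closed_sub: "is_sublocale (closed_sub (a :: 'a::frame))"
proof (rule is_sublocaleI)
  show "Inf X \<in> closed_sub a" if "X \<subseteq> closed_sub a" for X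
    using that by (auto simp: closed_sub_def intro: Inf_greatest)
  show "himp x s \<in> closed_sub a" if "s \<in> closed_sub a" for x s
    using that le_himp[of s x] by (simp add: closed_sub_def)
qed

lemma is_sublocale_open_sub: "is_sublocale (open_sub (a :: 'a::frame))"
proof (rule is_sublocaleI)
  fix X assume "X \<subseteq> open_sub a"
  then have "himp a ` X = X" by (force simp: open_sub_def)
  then show "Inf X \<in> open_sub a" by (simp add: open_sub_def himp_Inf)
next
  fix x s assume "s \<in> open_sub a"
  moreover have "himp a (himp x s) = himp x (himp a s)" by (simp add: himp_himp inf_commute)
  ultimately show "himp x s \<in> open_sub a" by (simp add: open_sub_def)
qed

lemma sublocale_join_mem_iff:
  assumes "is_sublocale A" "is_sublocale B"
  shows "x \<in> sublocale_join A B \<longleftrightarrow> x = inf (nucleus A x) (nucleus B x)"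
proof
  assume "x \<in> sublocale_join A B"
  then obtain a b where "a \<in> A" "b \<in> B" "x = inf a b" unfolding sublocale_join_def by blast
  then have "nucleus A x \<le> a" "nucleus B x \<le> b" by (simp_all add: nucleus_le)
  then have "inf (nucleus A x) (nucleus B x) \<le> x" unfolding \<open>x = inf a b\<close> by (rule inf_mono)
  then show "x = inf (nucleus A x) (nucleus B x)" by (simp add: order.antisym le_nucleus)
qed (use assms nucleus_mem in \<open>auto simp: sublocale_join_def\<close>)

lemma is_sublocale_sublocale_join:
  assumes A: "is_sublocale A" and B: "is_sublocale B"
  shows "is_sublocale (sublocale_join A B)"
proof (rule is_sublocaleI)
  fix X assume "X \<subseteq> sublocale_join A B"
  then have "(\<lambda>x. inf (nucleus A x) (nucleus B x)) ` X = X"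
    using sublocale_join_mem_iff[OF A B] by (force simp: image_iff)
  then have "Inf X = (INF x\<in>X. inf (nucleus A x) (nucleus B x))" by simp
  also have "\<dots> = inf (INF x\<in>X. nucleus A x) (INF x\<in>X. nucleus B x)"
    by (rule INF_inf_distrib[symmetric])
  also have "\<dots> \<in> sublocale_join A B"
    unfolding sublocale_join_def using A B by (blast intro: sublocale_Inf_mem nucleus_mem)
  finally show "Inf X \<in> sublocale_join A B" .
next
  fix x s assume "s \<in> sublocale_join A B"
  then obtain a b where "a \<in> A" "b \<in> B" "s = inf a b" unfolding sublocale_join_def by blast
  then show "himp x s \<in> sublocale_join A B"
    unfolding sublocale_join_def using A B by (auto simp: himp_inf intro!: sublocale_himp_mem)
qed

lemma coS_meet_eq_UNIV_iff:
  assumes A: "is_sublocale A" and B: "is_sublocale B"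
  shows "coS_meet A B = UNIV \<longleftrightarrow> cover A B"
proof
  have "A \<union> B \<subseteq> sublocale_join A B"
    unfolding sublocale_join_def using A B sublocale_top_mem
    by (force intro: exI[of _ top] simp: inf_commute[of _ top])
  then have "coS_meet A B \<subseteq> sublocale_join A B"
    unfolding coS_meet_def using is_sublocale_sublocale_join[OF A B] by blast
  moreover assume "coS_meet A B = UNIV"
  ultimately show "cover A B" unfolding cover_def sublocale_join_def by blast
next
  assume cov: "cover A B"
  have "x \<in> S" if "is_sublocale S" "A \<union> B \<subseteq> S" for S x
  proof -
    obtain a b where "a \<in> A" "b \<in> B" "x = inf a b" using cov unfolding cover_def by blast
    then show "x \<in> S" using sublocale_Inf_mem[OF that(1), of "{a, b}"] that(2) by auto
  qed
  then show "coS_meet A B = UNIV" unfolding coS_meet_def by auto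
qed

lemma cover_commute: "cover A B \<longleftrightarrow> cover B A"
  unfolding cover_def by (metis inf_commute)

lemma cover_mono: "cover A B \<Longrightarrow> A \<subseteq> A' \<Longrightarrow> B \<subseteq> B' \<Longrightarrow> cover A' B'"
  unfolding cover_def by blast

lemma cover_UNIV: "is_sublocale A \<Longrightarrow> cover A UNIV"
  unfolding cover_def using sublocale_top_mem by force

lemma subset_if_cover_disjoint:
  assumes A: "is_sublocale A" and D: "is_sublocale D"
    and disj: "A \<inter> D \<subseteq> {top}" and cov: "cover Y D"
  shows "A \<subseteq> Y"
proof
  fix x assume x: "x \<in> A"
  obtain y d where "y \<in> Y" "d \<in> D" and xyd: "x = inf y d" using cov unfolding cover_def by blast
  have "himp y x = himp y d" using xyd by (simp add: himp_inf_same)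
  then have "himp y x \<in> A \<inter> D"
    using sublocale_himp_mem[OF A x, of y] sublocale_himp_mem[OF D \<open>d \<in> D\<close>, of y] by simp
  then have "y \<le> x" using disj by (auto simp: himp_eq_top_iff)
  then show "x \<in> Y" using xyd \<open>y \<in> Y\<close> by (simp add: inf.absorb1)
qed

section \<open>Closed and open sublocales\<close>

lemma mem_join_closed_open:
  fixes n x d :: "'a::frame"
  assumes "inf n (himp x d) \<le> d"
  shows "d \<in> sublocale_join (closed_sub n) (open_sub x)"
proof -
  have "inf (sup n d) (himp x d) = sup (inf n (himp x d)) (inf d (himp x d))"
    by (rule inf_sup_distrib2)
  also have "\<dots> = d" using assms le_himp[of d x] by (simp add: inf.absorb1 sup.absorb2)
  finally have "d = inf (sup n d) (himp x d)" ..
  moreover have "sup n d \<in> closed_sub n" "himp x d \<in> open_sub x"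
    by (simp_all add: closed_sub_def open_sub_def himp_himp_same)
  ultimately show ?thesis unfolding sublocale_join_def by blast
qed

lemma cover_closed_open: "cover (closed_sub a) (open_sub (a :: 'a::frame))"
  using mem_join_closed_open[OF inf_himp_le] unfolding cover_def sublocale_join_def by blast

lemma closed_Int_open_subset_top: "closed_sub a \<inter> open_sub (a :: 'a::frame) \<subseteq> {top}"
  by (auto simp: closed_sub_def open_sub_def) (metis himp_eq_top_iff)

lemma closed_open_Int_disjoint:
  fixes x n :: "'a::frame"
  shows "(closed_sub x \<inter> open_sub n) \<inter> sublocale_join (closed_sub n) (open_sub x) \<subseteq> {top}"
proof
  fix u assume "u \<in> (closed_sub x \<inter> open_sub n) \<inter> sublocale_join (closed_sub n) (open_sub x)"
  then obtain p q where "x \<le> u" "himp n u = u" "n \<le> p" "himp x q = q" "u = inf p q"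
    unfolding closed_sub_def open_sub_def sublocale_join_def by blast
  then have "q = top" by (metis himp_eq_top_iff le_inf_iff)
  then have "n \<le> u" using \<open>n \<le> p\<close> \<open>u = inf p q\<close> by simp
  then show "u \<in> {top}" using \<open>himp n u = u\<close> himp_eq_top_iff[of n u] by simp
qed

lemma cover_closed_open_Int:
  fixes x n :: "'a::frame"
  shows "cover (closed_sub x \<inter> open_sub n) (sublocale_join (closed_sub n) (open_sub x))"
  unfolding cover_def
proof
  fix z
  define a where "a = himp n (sup x z)"
  define b where "b = himp a z"
  have "x \<le> a" "z \<le> a" unfolding a_def using le_himp[of "sup x z" n] by simp_all
  then have a: "a \<in> closed_sub x \<inter> open_sub n"
    unfolding a_def closed_sub_def open_sub_def by (simp add: himp_himp_same)
  have "inf (inf n a) (himp x b) \<le> inf (sup x z) (himp x b)"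
    using inf_himp_le[of n "sup x z"] unfolding a_def[symmetric] by (rule inf_mono) simp
  also have "\<dots> = sup (inf x (himp x b)) (inf z (himp x b))" by (rule inf_sup_distrib2)
  also have "\<dots> \<le> sup b z" using inf_himp_le[of x b] by (rule sup_mono) simp
  finally have "inf (inf n (himp x b)) a \<le> sup b z" by (simp add: ac_simps)
  then have "inf (inf n (himp x b)) a \<le> inf (sup b z) a" by simp
  also have "\<dots> = sup (inf b a) (inf z a)" by (rule inf_sup_distrib2)
  also have "\<dots> \<le> z" using inf_himp_le[of a z] by (simp add: b_def inf_commute)
  finally have "inf n (himp x b) \<le> b" unfolding b_def by (simp add: le_himp_iff)
  then have "b \<in> sublocale_join (closed_sub n) (open_sub x)" by (rule mem_join_closed_open)
  moreover have "z = inf a b" unfolding b_def using \<open>z \<le> a\<close> by (simp add: inf_himp_eq)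
  ultimately show "\<exists>a\<in>closed_sub x \<inter> open_sub n.
      \<exists>b\<in>sublocale_join (closed_sub n) (open_sub x). z = inf a b"
    using a by blast
qed

lemma sublocale_subset_join_nucleus:
  assumes D: "is_sublocale D"
  shows "D \<subseteq> sublocale_join (closed_sub (nucleus D x)) (open_sub x)"
proof
  fix d assume "d \<in> D"
  have "x \<le> himp (himp x d) d" by (simp add: le_himp_iff inf_commute inf_himp_le)
  moreover have "himp (himp x d) d \<in> D" using sublocale_himp_mem[OF D \<open>d \<in> D\<close>] .
  ultimately have "nucleus D x \<le> himp (himp x d) d" by (rule nucleus_le[rotated])
  then have "inf (nucleus D x) (himp x d) \<le> d" by (simp add: le_himp_iff)
  then show "d \<in> sublocale_join (closed_sub (nucleus D x)) (open_sub x)"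
    by (rule mem_join_closed_open)
qed

lemma mem_if_mem_join_nucleus:
  assumes D: "is_sublocale D"
    and x: "x \<in> sublocale_join (closed_sub (nucleus D x)) (open_sub x)"
  shows "x \<in> D"
proof -
  from x obtain p q where "nucleus D x \<le> p" "himp x q = q" "x = inf p q"
    unfolding sublocale_join_def closed_sub_def open_sub_def by blast
  then have "x \<le> q" by simp
  then have "q = top" using \<open>himp x q = q\<close> himp_eq_top_iff[of x q] by simp
  then have "nucleus D x \<le> x" using \<open>nucleus D x \<le> p\<close> \<open>x = inf p q\<close> by simp
  then have "nucleus D x = x" by (simp add: order.antisym le_nucleus)
  then show "x \<in> D" using nucleus_mem[OF D, of x] by simp
qed

lemma cover_if_closed_open_Int_subset:
  assumes Y: "is_sublocale Y" and D: "is_sublocale D"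
    and sub: "\<And>x. closed_sub x \<inter> open_sub (nucleus D x) \<subseteq> Y"
  shows "cover Y D"
  unfolding cover_def
proof
  fix z
  define y where "y = nucleus Y z"
  define x where "x = himp y z"
  obtain a b where a: "a \<in> closed_sub x \<inter> open_sub (nucleus D x)"
    and b: "b \<in> sublocale_join (closed_sub (nucleus D x)) (open_sub x)" and "z = inf a b"
    using cover_closed_open_Int unfolding cover_def by blast
  have "a \<in> Y" using a sub by blast
  then have "y \<le> a" unfolding y_def using \<open>z = inf a b\<close> by (simp add: nucleus_le)
  then have "himp y a = top" by (simp add: himp_eq_top_iff)
  then have "x = himp y b" unfolding x_def \<open>z = inf a b\<close> by (simp add: himp_inf)
  then have "x \<in> sublocale_join (closed_sub (nucleus D x)) (open_sub x)"
    using sublocale_himp_mem[OF is_sublocale_sublocale_join[OF is_sublocale_closed_sub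
        is_sublocale_open_sub] b] by simp
  then have "x \<in> D" by (rule mem_if_mem_join_nucleus[OF D])
  moreover have "y \<in> Y" unfolding y_def by (rule nucleus_mem[OF Y])
  moreover have "z = inf y x" unfolding x_def y_def by (simp add: inf_himp_eq le_nucleus)
  ultimately show "\<exists>y\<in>Y. \<exists>d\<in>D. z = inf y d" by blast
qed

section \<open>Subfit frames\<close>

lemma subfit_open_eq_Inf:
  fixes n u :: "'a::frame"
  assumes sf: "subfit TYPE('a)" and u: "himp n u = u"
  shows "u = Inf {sup u e |e. sup e n = top}"
proof (rule order.antisym)
  show "u \<le> Inf {sup u e |e. sup e n = top}" by (auto intro: Inf_greatest)
next
  define v where "v = Inf {sup u e |e. sup e n = top}"
  have v_le: "v \<le> sup u e" if "sup e n = top" for e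
    unfolding v_def using that by (auto intro: Inf_lower)
  have "inf v n \<le> u"
  proof (rule ccontr)
    assume "\<not> inf v n \<le> u"
    then obtain c where c: "sup (inf v n) c = top" "sup u c \<noteq> top"
      using sf unfolding subfit_def by blast
    have "sup (inf v n) c \<le> sup c n" by (simp add: le_supI1 le_supI2 inf.coboundedI2)
    then have "v \<le> sup u c" using c(1) v_le by (simp add: top_unique)
    have "top = sup (inf v n) c" using c(1) by simp
    also have "\<dots> \<le> sup v c" by (simp add: le_supI1 inf.coboundedI1)
    also have "\<dots> \<le> sup u c" using \<open>v \<le> sup u c\<close> by simp
    finally show False using c(2) top_unique by blast
  qed
  then show "v \<le> u" using u le_himp_iff[of v n u] by simp
qed

lemma subfit_closed_open_Int_subset:
  fixes x n :: "'a::frame"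
  assumes sf: "subfit TYPE('a)" and Y: "is_sublocale Y"
    and closed: "\<And>a. closed_sub a \<subseteq> closed_sub x \<inter> open_sub n \<Longrightarrow> closed_sub a \<subseteq> Y"
  shows "closed_sub x \<inter> open_sub n \<subseteq> Y"
proof
  fix u assume "u \<in> closed_sub x \<inter> open_sub n"
  then have "x \<le> u" and u: "himp n u = u" by (simp_all add: closed_sub_def open_sub_def)
  have "sup u e \<in> Y" if e: "sup e n = top" for e
  proof -
    have "h \<in> closed_sub x \<inter> open_sub n" if "sup u e \<le> h" for h
      using that order.trans[OF \<open>x \<le> u\<close>] himp_eq_if_sup_eq_top[OF e, of h]
      by (simp add: closed_sub_def open_sub_def)
    then have "closed_sub (sup u e) \<subseteq> closed_sub x \<inter> open_sub n"
      by (auto simp: closed_sub_def)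
    then have "closed_sub (sup u e) \<subseteq> Y" by (rule closed)
    then show ?thesis by (simp add: closed_sub_def subset_eq)
  qed
  then have "Inf {sup u e |e. sup e n = top} \<in> Y" by (intro sublocale_Inf_mem[OF Y]) blast
  then show "u \<in> Y" using subfit_open_eq_Inf[OF sf u] by simp
qed

lemma subfit_subset_if_closed_subsets:
  fixes F :: "'a::frame set"
  assumes sf: "subfit TYPE('a)"
    and sl: "is_sublocale F'" "is_sublocale D" "is_sublocale Y"
    and cov: "cover F D" and disj: "F' \<inter> D \<subseteq> {top}"
    and closed: "\<And>a. closed_sub a \<subseteq> F \<Longrightarrow> closed_sub a \<subseteq> Y"
  shows "F' \<subseteq> Y"
proof -
  have "closed_sub x \<inter> open_sub (nucleus D x) \<subseteq> F" for x
  proof (rule subset_if_cover_disjoint[OF _ sl(2) _ cov])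
    show "is_sublocale (closed_sub x \<inter> open_sub (nucleus D x))"
      by (intro is_sublocale_Int is_sublocale_closed_sub is_sublocale_open_sub)
    (* it is the complement of c(\<nu>_D x) \<or> o(x), which contains D *)
    show "(closed_sub x \<inter> open_sub (nucleus D x)) \<inter> D \<subseteq> {top}"
      using sublocale_subset_join_nucleus[OF sl(2), of x] closed_open_Int_disjoint[of x] by blast
  qed
  then have "closed_sub x \<inter> open_sub (nucleus D x) \<subseteq> Y" for x
    using closed by (intro subfit_closed_open_Int_subset[OF sf sl(3)]) blast
  then have "cover Y D" by (rule cover_if_closed_open_Int_subset[OF sl(3,2)])
  then show "F' \<subseteq> Y" by (rule subset_if_cover_disjoint[OF sl(1,2) disj])
qed

section \<open>Frame homomorphisms from the extended reals to coS(L)\<close>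

lemma extC_coS_iff:
  "f \<in> extC_coS TYPE('a::frame) \<longleftrightarrow>
     (\<forall>g. is_sublocale (f g))
   \<and> (\<forall>r s. s \<le> r \<longrightarrow> cover (f (Up r)) (f (Down s)))
   \<and> (\<forall>r s. r < s \<longrightarrow> f (Up r) \<inter> f (Down s) \<subseteq> {top})
   \<and> (\<forall>r x. x \<in> f (Up r) \<longleftrightarrow> (\<forall>s>r. x \<in> f (Up s)))
   \<and> (\<forall>s x. x \<in> f (Down s) \<longleftrightarrow> (\<forall>r<s. x \<in> f (Down r)))"
proof -
  have Up: "f (Up r) = \<Inter>{f (Up s) |s. s > r} \<longleftrightarrow> (\<forall>x. x \<in> f (Up r) \<longleftrightarrow> (\<forall>s>r. x \<in> f (Up s)))"
    for r by blast
  have Down: "f (Down s) = \<Inter>{f (Down r) |r. r < s} \<longleftrightarrow> (\<forall>x. x \<in> f (Down s) \<longleftrightarrow> (\<forall>r<s. x \<in> f (Down r)))"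
    for s by blast
  have meet: "coS_meet (f (Up r)) (f (Down s)) = UNIV \<longleftrightarrow> cover (f (Up r)) (f (Down s))"
    and top: "f (Up r) \<inter> f (Down s) = {top} \<longleftrightarrow> f (Up r) \<inter> f (Down s) \<subseteq> {top}"
    if "\<forall>g. is_sublocale (f g)" for r s
    using that coS_meet_eq_UNIV_iff sublocale_top_mem by blast+
  show ?thesis
    unfolding extC_coS_def coS_bot_def coS_top_def coS_join_def coS_Join_def mem_Collect_eq Up Down
    by (cases "\<forall>g. is_sublocale (f g)") (simp_all only: meet top simp_thms)
qed

context
  fixes f :: "gen \<Rightarrow> 'a::frame set"
  assumes f: "f \<in> extC_coS TYPE('a)"
begin

lemma extC_sublocale: "is_sublocale (f g)"
  using f unfolding extC_coS_iff by blast

lemma extC_cover: "s \<le> r \<Longrightarrow> cover (f (Up r)) (f (Down s))"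
  using f unfolding extC_coS_iff by blast

lemma extC_disjoint: "r < s \<Longrightarrow> f (Up r) \<inter> f (Down s) \<subseteq> {top}"
  using f unfolding extC_coS_iff by blast

lemma extC_Up_iff: "x \<in> f (Up r) \<longleftrightarrow> (\<forall>s>r. x \<in> f (Up s))"
  using f unfolding extC_coS_iff by blast

lemma extC_Down_iff: "x \<in> f (Down s) \<longleftrightarrow> (\<forall>r<s. x \<in> f (Down r))"
  using f unfolding extC_coS_iff by blast

lemma extC_Up_mono: "r \<le> r' \<Longrightarrow> f (Up r) \<subseteq> f (Up r')"
  using extC_Up_iff by (metis order.order_iff_strict order.strict_trans1 subsetI)

end

lemma extC_le_iff: "extC_le f g \<longleftrightarrow> (\<forall>r. g (Up r) \<subseteq> f (Up r))"
  by (simp add: extC_le_def coS_le_def)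

lemma subfit_extC_le_if_closed_subsets:
  fixes f y :: "gen \<Rightarrow> 'a::frame set"
  assumes sf: "subfit TYPE('a)" and f: "f \<in> extC_coS TYPE('a)" and y: "y \<in> extC_coS TYPE('a)"
    and closed: "\<And>a t. closed_sub a \<subseteq> f (Up t) \<Longrightarrow> closed_sub a \<subseteq> y (Up t)"
  shows "extC_le y f"
  unfolding extC_le_iff
proof (intro allI subsetI)
  fix r x assume "x \<in> f (Up r)"
  have "f (Up r) \<subseteq> y (Up s)" if "r < s" for s
    using subfit_subset_if_closed_subsets[OF sf extC_sublocale[OF f] extC_sublocale[OF f]
        extC_sublocale[OF y] extC_cover[OF f order.refl] extC_disjoint[OF f that] closed] .
  then show "x \<in> y (Up r)" using \<open>x \<in> f (Up r)\<close> extC_Up_iff[OF y] by blast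
qed

section \<open>Meet density of lower semicontinuous functions\<close>

lemma mem_if_less_iff_all_greater:
  fixes r t :: "'a::{dense_linorder, no_top}"
  assumes "A \<subseteq> B"
  shows "x \<in> (if r < t then A else B) \<longleftrightarrow> (\<forall>s>r. x \<in> (if s < t then A else B))"
proof (cases "r < t")
  case True
  then obtain q where "r < q" "q < t" using dense by blast
  show ?thesis
  proof
    assume "\<forall>s>r. x \<in> (if s < t then A else B)"
    then have "x \<in> (if q < t then A else B)" using \<open>r < q\<close> by blast
    then show "x \<in> (if r < t then A else B)" using \<open>q < t\<close> True by simp
  qed (use True assms in auto)
next
  case False
  obtain s where "r < s" using gt_ex by blast
  show ?thesis
  proof
    assume "\<forall>s>r. x \<in> (if s < t then A else B)"
    then have "x \<in> (if s < t then A else B)" using \<open>r < s\<close> by blast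
    moreover have "\<not> s < t" using False \<open>r < s\<close> by simp
    ultimately show "x \<in> (if r < t then A else B)" using False by simp
  qed (use False in auto)
qed

lemma mem_if_le_iff_all_less:
  fixes s t :: "'a::{dense_linorder, no_bot}"
  assumes "B \<subseteq> A"
  shows "x \<in> (if s \<le> t then A else B) \<longleftrightarrow> (\<forall>r<s. x \<in> (if r \<le> t then A else B))"
proof (cases "s \<le> t")
  case True
  obtain r where "r < s" using lt_ex by blast
  show ?thesis
  proof
    assume "\<forall>r<s. x \<in> (if r \<le> t then A else B)"
    then have "x \<in> (if r \<le> t then A else B)" using \<open>r < s\<close> by blast
    moreover have "r \<le> t" using True \<open>r < s\<close> by simp
    ultimately show "x \<in> (if s \<le> t then A else B)" using True by simp
  qed (use True in auto)
next
  case False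
  then have "t < s" by simp
  then obtain q where "t < q" "q < s" using dense by blast
  show ?thesis
  proof
    assume "\<forall>r<s. x \<in> (if r \<le> t then A else B)"
    then have "x \<in> (if q \<le> t then A else B)" using \<open>q < s\<close> by blast
    moreover have "\<not> q \<le> t" using \<open>t < q\<close> by simp
    ultimately show "x \<in> (if s \<le> t then A else B)" using False by simp
  qed (use False assms in auto)
qed

(* The function with value +\<infinity> on c(a) and t elsewhere. *)
definition step_fun :: "'a::frame \<Rightarrow> rat \<Rightarrow> gen \<Rightarrow> 'a set" where
  "step_fun a t = (\<lambda>g. case g of
      Up r \<Rightarrow> if r < t then {top} else closed_sub a
    | Down s \<Rightarrow> if s \<le> t then UNIV else open_sub a)"

lemma step_fun_Up: "step_fun a t (Up r) = (if r < t then {top} else closed_sub a)"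
  by (simp add: step_fun_def)

lemma step_fun_Down: "step_fun a t (Down s) = (if s \<le> t then UNIV else open_sub a)"
  by (simp add: step_fun_def)

lemma step_fun_extC: "step_fun (a :: 'a::frame) t \<in> extC_coS TYPE('a)"
  unfolding extC_coS_iff
proof (intro conjI allI impI)
  show "is_sublocale (step_fun a t g)" for g
    by (cases g) (simp_all add: step_fun_def is_sublocale_top is_sublocale_closed_sub
        is_sublocale_UNIV is_sublocale_open_sub)
  show "cover (step_fun a t (Up r)) (step_fun a t (Down s))" if "s \<le> r" for r s
    using that cover_UNIV[OF is_sublocale_top] cover_UNIV[OF is_sublocale_closed_sub]
      cover_closed_open[of a]
    by (auto simp: step_fun_Up step_fun_Down)
  show "step_fun a t (Up r) \<inter> step_fun a t (Down s) \<subseteq> {top}" if "r < s" for r s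
    using that closed_Int_open_subset_top[of a] by (auto simp: step_fun_Up step_fun_Down)
  show "x \<in> step_fun a t (Up r) \<longleftrightarrow> (\<forall>s>r. x \<in> step_fun a t (Up s))" for r x
    unfolding step_fun_Up using sublocale_top_mem[OF is_sublocale_closed_sub, of a]
    by (intro mem_if_less_iff_all_greater) simp
  show "x \<in> step_fun a t (Down s) \<longleftrightarrow> (\<forall>r<s. x \<in> step_fun a t (Down r))" for s x
    unfolding step_fun_Down by (rule mem_if_le_iff_all_less) simp
qed

lemma step_fun_extLSC: "step_fun (a :: 'a::frame) t \<in> extLSC TYPE('a)"
proof -
  have "closed_sub (top :: 'a) = {top}" by (auto simp: closed_sub_def top_unique)
  then have "\<exists>b. step_fun a t (Up r) = closed_sub b" for r
    by (auto simp: step_fun_Up)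
  then show ?thesis unfolding extLSC_def using step_fun_extC by blast
qed

lemma extC_le_step_fun_iff:
  assumes f: "f \<in> extC_coS TYPE('a::frame)"
  shows "extC_le f (step_fun (a :: 'a) t) \<longleftrightarrow> closed_sub a \<subseteq> f (Up t)"
proof
  assume "extC_le f (step_fun a t)"
  then have "step_fun a t (Up t) \<subseteq> f (Up t)" by (simp add: extC_le_iff)
  then show "closed_sub a \<subseteq> f (Up t)" by (simp add: step_fun_Up)
next
  assume a: "closed_sub a \<subseteq> f (Up t)"
  show "extC_le f (step_fun a t)"
    unfolding extC_le_iff step_fun_Up
  proof
    fix r
    show "(if r < t then {top} else closed_sub a) \<subseteq> f (Up r)"
      using sublocale_top_mem[OF extC_sublocale[OF f]] order.trans[OF a extC_Up_mono[OF f, of t r]]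
      by simp
  qed
qed

lemma subfit_extLSC_meet_dense:
  assumes sf: "subfit TYPE('a::frame)"
  shows "meet_dense (extC_coS TYPE('a)) extC_le (extLSC TYPE('a))"
  unfolding meet_dense_def
proof
  fix f assume f: "f \<in> extC_coS TYPE('a)"
  let ?B = "{g \<in> extLSC TYPE('a). extC_le f g}"
  have "is_meet_in (extC_coS TYPE('a)) extC_le ?B f"
    unfolding is_meet_in_def
  proof (intro conjI ballI impI)
    fix y assume y: "y \<in> extC_coS TYPE('a)" and lower: "\<forall>g\<in>?B. extC_le y g"
    show "extC_le y f"
    proof (rule subfit_extC_le_if_closed_subsets[OF sf f y])
      fix a :: 'a and t assume "closed_sub a \<subseteq> f (Up t)"
      then have "step_fun a t \<in> ?B" using step_fun_extLSC extC_le_step_fun_iff[OF f] by blast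
      then show "closed_sub a \<subseteq> y (Up t)" using lower extC_le_step_fun_iff[OF y] by blast
    qed
  qed (use f in simp_all)
  then show "\<exists>B\<subseteq>extLSC TYPE('a). is_meet_in (extC_coS TYPE('a)) extC_le B f"
    by (intro exI[of _ ?B]) simp
qed

section \<open>Join density of upper semicontinuous functions\<close>

definition neg_fun :: "(gen \<Rightarrow> 'a set) \<Rightarrow> gen \<Rightarrow> 'a set" where
  "neg_fun f = (\<lambda>g. case g of Up r \<Rightarrow> f (Down (- r)) | Down s \<Rightarrow> f (Up (- s)))"

lemma neg_fun_Up [simp]: "neg_fun f (Up r) = f (Down (- r))"
  by (simp add: neg_fun_def)

lemma neg_fun_Down [simp]: "neg_fun f (Down s) = f (Up (- s))"
  by (simp add: neg_fun_def)

lemma neg_fun_neg_fun [simp]: "neg_fun (neg_fun f) = f"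
proof
  show "neg_fun (neg_fun f) g = f g" for g by (cases g) simp_all
qed

lemma all_less_uminus_iff: "(\<forall>q < - r. P q) \<longleftrightarrow> (\<forall>s > r. P (- s :: 'a::ordered_ab_group_add))"
  by (metis minus_less_iff minus_minus)

lemma all_greater_uminus_iff: "(\<forall>q > - s. P q) \<longleftrightarrow> (\<forall>r < s. P (- r :: 'a::ordered_ab_group_add))"
  by (metis less_minus_iff minus_minus)

lemma neg_fun_extC:
  assumes f: "f \<in> extC_coS TYPE('a::frame)"
  shows "neg_fun f \<in> extC_coS TYPE('a)"
  unfolding extC_coS_iff
proof (intro conjI allI impI)
  show "is_sublocale (neg_fun f g)" for g
    by (cases g) (simp_all add: extC_sublocale[OF f])
  show "cover (neg_fun f (Up r)) (neg_fun f (Down s))" if "s \<le> r" for r s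
    using extC_cover[OF f, of "- r" "- s"] that by (simp add: cover_commute)
  show "neg_fun f (Up r) \<inter> neg_fun f (Down s) \<subseteq> {top}" if "r < s" for r s
    using extC_disjoint[OF f, of "- s" "- r"] that by (simp add: Int_commute)
  show "x \<in> neg_fun f (Up r) \<longleftrightarrow> (\<forall>s>r. x \<in> neg_fun f (Up s))" for r x
    using extC_Down_iff[OF f, of x "- r"] by (simp add: all_less_uminus_iff)
  show "x \<in> neg_fun f (Down s) \<longleftrightarrow> (\<forall>r<s. x \<in> neg_fun f (Down r))" for s x
    using extC_Up_iff[OF f, of x "- s"] by (simp add: all_greater_uminus_iff)
qed

lemma extC_le_iff_Down:
  assumes f: "f \<in> extC_coS TYPE('a::frame)" and g: "g \<in> extC_coS TYPE('a)"
  shows "extC_le f g \<longleftrightarrow> (\<forall>s. f (Down s) \<subseteq> g (Down s))"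
proof
  assume le: "extC_le f g"
  have "f (Down s) \<subseteq> g (Down r)" if "r < s" for r s
  proof (rule subset_if_cover_disjoint[OF extC_sublocale[OF f] extC_sublocale[OF f]])
    show "f (Down s) \<inter> f (Up r) \<subseteq> {top}" using extC_disjoint[OF f that] by blast
    show "cover (g (Down r)) (f (Up r))"
    proof (rule cover_mono[OF _ order.refl])
      show "cover (g (Down r)) (g (Up r))" using extC_cover[OF g order.refl] cover_commute by blast
      show "g (Up r) \<subseteq> f (Up r)" using le by (simp add: extC_le_iff)
    qed
  qed
  then show "\<forall>s. f (Down s) \<subseteq> g (Down s)" using extC_Down_iff[OF g] by blast
next
  assume le: "\<forall>s. f (Down s) \<subseteq> g (Down s)"
  have "g (Up r) \<subseteq> f (Up s)" if "r < s" for r s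
  proof (rule subset_if_cover_disjoint[OF extC_sublocale[OF g] extC_sublocale[OF g]])
    show "g (Up r) \<inter> g (Down s) \<subseteq> {top}" using extC_disjoint[OF g that] .
    show "cover (f (Up s)) (g (Down s))"
      using cover_mono[OF extC_cover[OF f order.refl] order.refl] le by blast
  qed
  then show "extC_le f g" unfolding extC_le_iff using extC_Up_iff[OF f] by blast
qed

lemma extC_le_neg_fun_iff:
  assumes f: "f \<in> extC_coS TYPE('a::frame)" and g: "g \<in> extC_coS TYPE('a)"
  shows "extC_le (neg_fun g) (neg_fun f) \<longleftrightarrow> extC_le f g"
proof -
  have "extC_le (neg_fun g) (neg_fun f) \<longleftrightarrow> (\<forall>r. f (Down (- r)) \<subseteq> g (Down (- r)))"
    by (simp add: extC_le_iff)
  also have "\<dots> \<longleftrightarrow> (\<forall>s. f (Down s) \<subseteq> g (Down s))" by (metis minus_minus)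
  also have "\<dots> \<longleftrightarrow> extC_le f g" by (rule extC_le_iff_Down[OF f g, symmetric])
  finally show ?thesis .
qed

lemma neg_fun_extLSC: "f \<in> extLSC TYPE('a::frame) \<Longrightarrow> neg_fun f \<in> extUSC TYPE('a)"
  unfolding extLSC_def extUSC_def by (simp add: neg_fun_extC)

lemma join_dense_if_meet_dense_antitone_involution:
  assumes dense: "meet_dense P le A" and "A \<subseteq> P" and "\<phi> ` A \<subseteq> A'"
    and closed: "\<And>x. x \<in> P \<Longrightarrow> \<phi> x \<in> P"
    and invol: "\<And>x. x \<in> P \<Longrightarrow> \<phi> (\<phi> x) = x"
    and antitone: "\<And>x y. x \<in> P \<Longrightarrow> y \<in> P \<Longrightarrow> le (\<phi> x) (\<phi> y) \<longleftrightarrow> le y x"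
  shows "join_dense P le A'"
  unfolding join_dense_def
proof
  fix x assume x: "x \<in> P"
  then obtain B where "B \<subseteq> A" and meet: "is_meet_in P le B (\<phi> x)"
    using dense closed unfolding meet_dense_def by blast
  then have B: "B \<subseteq> P" using \<open>A \<subseteq> P\<close> by blast
  have swap: "le (\<phi> y) b \<longleftrightarrow> le (\<phi> b) y" if "y \<in> P" "b \<in> P" for y b
    using antitone[of y "\<phi> b"] that closed invol by simp
  have "is_join_in P le (\<phi> ` B) x"
    unfolding is_join_in_def
  proof (intro conjI ballI impI)
    show "le b x" if "b \<in> \<phi> ` B" for b
      using that meet B swap[OF x] unfolding is_meet_in_def by auto
    show "le x y" if "y \<in> P" and upper: "\<forall>b\<in>\<phi> ` B. le b y" for y
    proof -
      have "\<forall>b\<in>B. le (\<phi> y) b" using upper B swap[OF that(1)] by auto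
      then have "le (\<phi> y) (\<phi> x)" using meet closed[OF that(1)] unfolding is_meet_in_def by blast
      then show "le x y" using antitone[OF that(1) x] by simp
    qed
  qed (rule x)
  moreover have "\<phi> ` B \<subseteq> A'" using \<open>B \<subseteq> A\<close> \<open>\<phi> ` A \<subseteq> A'\<close> by blast
  ultimately show "\<exists>B\<subseteq>A'. is_join_in P le B x" by blast
qed

theorem proposition4p4:
  assumes "subfit TYPE('a::frame)"
  shows "meet_dense (extC_coS TYPE('a)) extC_le (extLSC TYPE('a))
       \<and> join_dense (extC_coS TYPE('a)) extC_le (extUSC TYPE('a))"
proof
  show meet: "meet_dense (extC_coS TYPE('a)) extC_le (extLSC TYPE('a))"
    using assms by (rule subfit_extLSC_meet_dense)
  show "join_dense (extC_coS TYPE('a)) extC_le (extUSC TYPE('a))"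
  proof (rule join_dense_if_meet_dense_antitone_involution[OF meet])
    show "extLSC TYPE('a) \<subseteq> extC_coS TYPE('a)" by (auto simp: extLSC_def)
    show "neg_fun ` extLSC TYPE('a) \<subseteq> extUSC TYPE('a)" using neg_fun_extLSC by blast
  qed (simp_all add: neg_fun_extC extC_le_neg_fun_iff)
qed

end
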